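(* Let $\mathcal M,\mathcal M'$ be finite polyptych lattices over $F$ with index sets $I,I'$, and let $\mathrm{pr}:\mathcal M\times\mathcal M'\to\mathcal M$, $\mathrm{pr}':\mathcal M\times\mathcal M'\to\mathcal M'$ be the projections on sets of elements. Then $(p,p')\mapsto p\circ\mathrm{pr}+p'\circ\mathrm{pr}'$ is a bijection $\mathrm{Sp}(\mathcal M)\times\mathrm{Sp}(\mathcal M')\to\mathrm{Sp}(\mathcal M\times\mathcal M')$, and it maps $\mathrm{Sp}(\mathcal M,\alpha)\times\mathrm{Sp}(\mathcal M',\alpha')$ into $\mathrm{Sp}(\mathcal M\times\mathcal M',(\alpha,\alpha'))$ for all $\alpha\in I,\alpha'\in I'$.
   Context: Fix a subring $F$ with $\mathbb Z\subseteq F\subseteq\mathbb R$. A polyptych lattice of rank $r$ over $F$ is a collection $\{M_\alpha\}_{\alpha\in I}$ of free $F$-modules of rank $r$ with piecewise $F$-linear maps (continuous and $F$-linear on each cone of some complete $F$-rational fan) $\mu_{\alpha,\beta}:M_\alpha\to M_\beta$ with $\mu_{\alpha,\alpha}=\mathrm{id}$, $\mu_{\alpha,\beta}=\mu_{\beta,\alpha}^{-1}$, $\mu_{\beta,\gamma}\circ\mu_{\alpha,\beta}=\mu_{\alpha,\gamma}$; finite if $I$ is finite. Elements are classes of $\bigsqcup M_\alpha$ under $m_\alpha\sim\mu_{\alpha,\beta}(m_\alpha)$, $\pi_\alpha$ the chart maps, $m+_\alpha m':=\pi_\alpha^{-1}(\pi_\alpha(m)+\pi_\alpha(m'))$, $\lambda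 m:=\pi_\alpha^{-1}(\lambda\pi_\alpha(m))$ ($\lambda\ge 0$). A point is $p:\mathcal M\to F$ with $p(m)+p(m')=\min_\alpha p(m+_\alpha m')$ and $p(\lambda m)=\lambda p(m)$ ($\lambda\in F_{\ge0}$); $\mathrm{Sp}(\mathcal M)$ is the set of points and $\mathrm{Sp}(\mathcal M,\alpha)$ those $p$ with $p\circ\pi_\alpha^{-1}$ $F$-linear. The product polyptych lattice $\mathcal M\times\mathcal M'$ (rank $r+r'$) has charts $M_\alpha\times M'_{\alpha'}$ indexed by $(\alpha,\alpha')\in I\times I'$ and mutations $\mu_{\alpha,\beta}\times\mu'_{\alpha',\beta'}$; its elements are pairs $(m,m')$. *)

theory Defs
  imports "HOL-Analysis.Analysis"
begin

definition subring_R :: "real set \<Rightarrow> bool" where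
  "subring_R F \<longleftrightarrow> \<int> \<subseteq> F \<and> (\<forall>x\<in>F. \<forall>y\<in>F. x + y \<in> F \<and> x * y \<in> F \<and> - x \<in> F)"

text \<open>The F-lattice spanned by the standard basis; it is a free F-module of rank DIM('a).\<close>
definition Lat :: "real set \<Rightarrow> 'a::euclidean_space set" where
  "Lat F = {x. \<forall>b\<in>Basis. x \<bullet> b \<in> F}"

definition F_linear_map :: "real set \<Rightarrow> ('a::euclidean_space \<Rightarrow> 'a) \<Rightarrow> bool" where
  "F_linear_map F L \<longleftrightarrow> linear L \<and> L ` Lat F \<subseteq> Lat F"

definition cone_gen :: "'a::euclidean_space set \<Rightarrow> 'a set" where
  "cone_gen S = {y. \<exists>c. (\<forall>v\<in>S. 0 \<le> c v) \<and> y = (\<Sum>v\<in>S. c v *\<^sub>R v)}"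

definition F_rational_cone :: "real set \<Rightarrow> 'a::euclidean_space set \<Rightarrow> bool" where
  "F_rational_cone F \<sigma> \<longleftrightarrow>
     (\<exists>S. finite S \<and> S \<subseteq> Lat F \<and> \<sigma> = cone_gen S) \<and> \<sigma> \<inter> uminus ` \<sigma> = {0}"

definition complete_F_fan :: "real set \<Rightarrow> 'a::euclidean_space set set \<Rightarrow> bool" where
  "complete_F_fan F \<Sigma> \<longleftrightarrow>
     finite \<Sigma> \<and> (\<forall>\<sigma>\<in>\<Sigma>. F_rational_cone F \<sigma>) \<and>
     (\<forall>\<sigma>\<in>\<Sigma>. \<forall>\<tau>. \<tau> face_of \<sigma> \<and> \<tau> \<noteq> {} \<longrightarrow> \<tau> \<in> \<Sigma>) \<and>
     (\<forall>\<sigma>\<in>\<Sigma>. \<forall>\<tau>\<in>\<Sigma>. (\<sigma> \<inter> \<tau>) face_of \<sigma> \<and> (\<sigma> \<inter> \<tau>) face_of \<tau>) \<and>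
     \<Union>\<Sigma> = UNIV"

text \<open>Piecewise F-linear map M -> M: F-linear on (the lattice points of) each cone of some
  complete F-rational fan.  (Continuity is then automatic by the pasting lemma.)\<close>
definition piecewise_F_linear :: "real set \<Rightarrow> ('a::euclidean_space \<Rightarrow> 'a) \<Rightarrow> bool" where
  "piecewise_F_linear F f \<longleftrightarrow>
     f ` Lat F \<subseteq> Lat F \<and>
     (\<exists>\<Sigma>. complete_F_fan F \<Sigma> \<and>
        (\<forall>\<sigma>\<in>\<Sigma>. \<exists>L. F_linear_map F L \<and> (\<forall>x\<in>\<sigma> \<inter> Lat F. f x = L x)))"

text \<open>A polyptych lattice of rank DIM('a) over F with index set I and mutations mu.
  All charts M_alpha are identified with Lat F (after choosing bases).\<close>
definition polyptych :: "real set \<Rightarrow> 'i set \<Rightarrow> ('i \<Rightarrow> 'i \<Rightarrow> 'a::euclidean_space \<Rightarrow> 'a) \<Rightarrow> bool" where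
  "polyptych F I mu \<longleftrightarrow>
     I \<noteq> {} \<and>
     (\<forall>\<alpha>\<in>I. \<forall>\<beta>\<in>I. piecewise_F_linear F (mu \<alpha> \<beta>)) \<and>
     (\<forall>\<alpha>\<in>I. \<forall>x\<in>Lat F. mu \<alpha> \<alpha> x = x) \<and>
     (\<forall>\<alpha>\<in>I. \<forall>\<beta>\<in>I. \<forall>x\<in>Lat F. mu \<beta> \<alpha> (mu \<alpha> \<beta> x) = x) \<and>
     (\<forall>\<alpha>\<in>I. \<forall>\<beta>\<in>I. \<forall>\<gamma>\<in>I. \<forall>x\<in>Lat F. mu \<beta> \<gamma> (mu \<alpha> \<beta> x) = mu \<alpha> \<gamma> x)"

text \<open>An element (class of the disjoint union) is represented by its family of coordinates
  in all charts; pi_alpha(m) = m alpha.  chart_inv I mu alpha x is pi_alpha^{-1}(x).\<close>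
definition chart_inv :: "'i set \<Rightarrow> ('i \<Rightarrow> 'i \<Rightarrow> 'a \<Rightarrow> 'a) \<Rightarrow> 'i \<Rightarrow> 'a \<Rightarrow> ('i \<Rightarrow> 'a)" where
  "chart_inv I mu \<alpha> x = (\<lambda>\<beta>. if \<beta> \<in> I then mu \<alpha> \<beta> x else undefined)"

definition elems :: "real set \<Rightarrow> 'i set \<Rightarrow> ('i \<Rightarrow> 'i \<Rightarrow> 'a::euclidean_space \<Rightarrow> 'a) \<Rightarrow> ('i \<Rightarrow> 'a) set" where
  "elems F I mu = {chart_inv I mu \<alpha> x | \<alpha> x. \<alpha> \<in> I \<and> x \<in> Lat F}"

definition padd :: "'i set \<Rightarrow> ('i \<Rightarrow> 'i \<Rightarrow> 'a::euclidean_space \<Rightarrow> 'a) \<Rightarrow> 'i \<Rightarrow> ('i \<Rightarrow> 'a) \<Rightarrow> ('i \<Rightarrow> 'a) \<Rightarrow> ('i \<Rightarrow> 'a)" where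
  "padd I mu \<alpha> m m' = chart_inv I mu \<alpha> (m \<alpha> + m' \<alpha>)"

definition pscale :: "'i set \<Rightarrow> ('i \<Rightarrow> 'i \<Rightarrow> 'a::euclidean_space \<Rightarrow> 'a) \<Rightarrow> 'i \<Rightarrow> real \<Rightarrow> ('i \<Rightarrow> 'a) \<Rightarrow> ('i \<Rightarrow> 'a)" where
  "pscale I mu \<alpha> c m = chart_inv I mu \<alpha> (c *\<^sub>R m \<alpha>)"

text \<open>Points (for finite I); a point is a function elems -> F, extensional outside elems.\<close>
definition Sp :: "real set \<Rightarrow> 'i set \<Rightarrow> ('i \<Rightarrow> 'i \<Rightarrow> 'a::euclidean_space \<Rightarrow> 'a) \<Rightarrow> (('i \<Rightarrow> 'a) \<Rightarrow> real) set" where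
  "Sp F I mu = {p \<in> elems F I mu \<rightarrow>\<^sub>E F.
      (\<forall>m\<in>elems F I mu. \<forall>m'\<in>elems F I mu.
          p m + p m' = Min ((\<lambda>\<alpha>. p (padd I mu \<alpha> m m')) ` I)) \<and>
      (\<forall>c\<in>F. c \<ge> 0 \<longrightarrow> (\<forall>m\<in>elems F I mu. \<forall>\<alpha>\<in>I. p (pscale I mu \<alpha> c m) = c * p m))}"

definition F_linear_functional :: "real set \<Rightarrow> ('a::euclidean_space \<Rightarrow> real) \<Rightarrow> bool" where
  "F_linear_functional F f \<longleftrightarrow>
     (\<forall>x\<in>Lat F. \<forall>y\<in>Lat F. f (x + y) = f x + f y) \<and>
     (\<forall>c\<in>F. \<forall>x\<in>Lat F. f (c *\<^sub>R x) = c * f x)"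

definition Sp_chart :: "real set \<Rightarrow> 'i set \<Rightarrow> ('i \<Rightarrow> 'i \<Rightarrow> 'a::euclidean_space \<Rightarrow> 'a) \<Rightarrow> 'i \<Rightarrow> (('i \<Rightarrow> 'a) \<Rightarrow> real) set" where
  "Sp_chart F I mu \<alpha> = {p \<in> Sp F I mu. F_linear_functional F (\<lambda>x. p (chart_inv I mu \<alpha> x))}"

text \<open>Product polyptych lattice: charts M_alpha x M'_alpha' (in 'a x 'b, rank r + r'),
  mutations mu x mu'.\<close>
definition prod_mu :: "('i \<Rightarrow> 'i \<Rightarrow> 'a \<Rightarrow> 'a) \<Rightarrow> ('j \<Rightarrow> 'j \<Rightarrow> 'b \<Rightarrow> 'b) \<Rightarrow>
    ('i \<times> 'j) \<Rightarrow> ('i \<times> 'j) \<Rightarrow> ('a \<times> 'b) \<Rightarrow> ('a \<times> 'b)" where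
  "prod_mu mu nu = (\<lambda>(\<alpha>, \<alpha>') (\<beta>, \<beta>') (x, y). (mu \<alpha> \<beta> x, nu \<alpha>' \<beta>' y))"

definition pr1 :: "'i set \<Rightarrow> 'j set \<Rightarrow> (('i \<times> 'j) \<Rightarrow> ('a \<times> 'b)) \<Rightarrow> ('i \<Rightarrow> 'a)" where
  "pr1 I J E = (\<lambda>\<alpha>. if \<alpha> \<in> I then fst (E (\<alpha>, SOME \<beta>. \<beta> \<in> J)) else undefined)"

definition pr2 :: "'i set \<Rightarrow> 'j set \<Rightarrow> (('i \<times> 'j) \<Rightarrow> ('a \<times> 'b)) \<Rightarrow> ('j \<Rightarrow> 'b)" where
  "pr2 I J E = (\<lambda>\<beta>. if \<beta> \<in> J then snd (E (SOME \<alpha>. \<alpha> \<in> I, \<beta>)) else undefined)"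

definition sum_point :: "real set \<Rightarrow> 'i set \<Rightarrow> ('i \<Rightarrow> 'i \<Rightarrow> 'a::euclidean_space \<Rightarrow> 'a) \<Rightarrow>
    'j set \<Rightarrow> ('j \<Rightarrow> 'j \<Rightarrow> 'b::euclidean_space \<Rightarrow> 'b) \<Rightarrow>
    (('i \<Rightarrow> 'a) \<Rightarrow> real) \<times> (('j \<Rightarrow> 'b) \<Rightarrow> real) \<Rightarrow> ((('i \<times> 'j) \<Rightarrow> ('a \<times> 'b)) \<Rightarrow> real)" where
  "sum_point F I mu J nu = (\<lambda>(p, p').
     restrict (\<lambda>E. p (pr1 I J E) + p' (pr2 I J E)) (elems F (I \<times> J) (prod_mu mu nu)))"

end

theory Submission
  imports Defs
begin

text \<open>
  Every mutation fixes the origin, so each polyptych lattice has a distinguished element 0 and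
  the elements of the product are exactly the pairs (m, m') of elements of the factors.  A point
  P of the product restricts along m \<mapsto> (m, 0) and m' \<mapsto> (0, m') to points of the factors,
  because adding and scaling in the chart (\<alpha>, \<alpha>') of the product acts componentwise.
  Conversely (m, m') = (m, 0) + (0, m') in every chart, so the tropical
  relation for P collapses to P(m, m') = P(m, 0) + P(0, m'); and for points p, p' of the factors
  the minimum over the charts of a product is the sum of the two minima.  Hence the two
  constructions are mutually inverse.
\<close>

lemma Lat_add: "subring_R F \<Longrightarrow> x \<in> Lat F \<Longrightarrow> y \<in> Lat F \<Longrightarrow> x + y \<in> Lat F"
  by (simp add: Lat_def inner_add_left subring_R_def)

lemma Lat_scaleR: "subring_R F \<Longrightarrow> c \<in> F \<Longrightarrow> x \<in> Lat F \<Longrightarrow> c *\<^sub>R x \<in> Lat F"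
  by (simp add: Lat_def subring_R_def)

lemma zero_in_subring: "subring_R F \<Longrightarrow> 0 \<in> F"
  unfolding subring_R_def by auto

lemma Lat_zero: "subring_R F \<Longrightarrow> 0 \<in> Lat F"
  by (simp add: Lat_def zero_in_subring)

lemma Pair_in_Lat_iff: "(x, y) \<in> Lat F \<longleftrightarrow> x \<in> Lat F \<and> y \<in> Lat F"
  by (simp add: Lat_def Basis_prod_def ball_Un inner_Pair)

lemma Min_add_Times:
  fixes f :: "'a \<Rightarrow> real" and g :: "'b \<Rightarrow> real"
  assumes "finite A" "finite B" "A \<noteq> {}" "B \<noteq> {}"
  shows "Min ((\<lambda>(a, b). f a + g b) ` (A \<times> B)) = Min (f ` A) + Min (g ` B)"
proof (rule Min_eqI)
  show "finite ((\<lambda>(a, b). f a + g b) ` (A \<times> B))"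
    using assms by simp
  show "Min (f ` A) + Min (g ` B) \<le> y" if "y \<in> (\<lambda>(a, b). f a + g b) ` (A \<times> B)" for y
    using assms that by (auto intro!: add_mono)
  have "Min (f ` A) \<in> f ` A"
    using assms by simp
  then obtain a where "a \<in> A" "f a = Min (f ` A)"
    by auto
  have "Min (g ` B) \<in> g ` B"
    using assms by simp
  then obtain b where "b \<in> B" "g b = Min (g ` B)"
    by auto
  with \<open>a \<in> A\<close> \<open>f a = Min (f ` A)\<close> show "Min (f ` A) + Min (g ` B) \<in> (\<lambda>(a, b). f a + g b) ` (A \<times> B)"
    by (auto intro!: image_eqI[where x = "(a, b)"])
qed

lemma F_linear_functional_cong:
  assumes "subring_R F" and "\<And>x. x \<in> Lat F \<Longrightarrow> f x = g x"
  shows "F_linear_functional F f \<longleftrightarrow> F_linear_functional F g"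
  using assms by (simp add: F_linear_functional_def Lat_add Lat_scaleR)

lemma F_linear_functional_Pair:
  assumes "F_linear_functional F f" and "F_linear_functional F g"
  shows "F_linear_functional F (\<lambda>(x, y). f x + g y)"
  using assms by (auto simp: F_linear_functional_def Pair_in_Lat_iff distrib_left)

lemma SpI:
  assumes "p \<in> elems F I mu \<rightarrow>\<^sub>E F"
    and "\<And>m m'. m \<in> elems F I mu \<Longrightarrow> m' \<in> elems F I mu \<Longrightarrow>
          p m + p m' = Min ((\<lambda>\<alpha>. p (padd I mu \<alpha> m m')) ` I)"
    and "\<And>c m \<alpha>. c \<in> F \<Longrightarrow> c \<ge> 0 \<Longrightarrow> m \<in> elems F I mu \<Longrightarrow> \<alpha> \<in> I \<Longrightarrow>
          p (pscale I mu \<alpha> c m) = c * p m"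
  shows "p \<in> Sp F I mu"
  using assms by (simp add: Sp_def)

lemma Sp_extensional: "p \<in> Sp F I mu \<Longrightarrow> p \<in> elems F I mu \<rightarrow>\<^sub>E F"
  by (simp add: Sp_def)

lemma Sp_padd:
  "p \<in> Sp F I mu \<Longrightarrow> m \<in> elems F I mu \<Longrightarrow> m' \<in> elems F I mu \<Longrightarrow>
    p m + p m' = Min ((\<lambda>\<alpha>. p (padd I mu \<alpha> m m')) ` I)"
  by (simp add: Sp_def)

lemma Sp_pscale:
  "p \<in> Sp F I mu \<Longrightarrow> c \<in> F \<Longrightarrow> c \<ge> 0 \<Longrightarrow> m \<in> elems F I mu \<Longrightarrow> \<alpha> \<in> I \<Longrightarrow>
    p (pscale I mu \<alpha> c m) = c * p m"
  by (simp add: Sp_def)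

lemma Sp_in_subring: "p \<in> Sp F I mu \<Longrightarrow> m \<in> elems F I mu \<Longrightarrow> p m \<in> F"
  by (auto dest: Sp_extensional)

lemma elemsE:
  assumes "m \<in> elems F I mu"
  obtains \<alpha> x where "\<alpha> \<in> I" "x \<in> Lat F" "m = chart_inv I mu \<alpha> x"
  using assms unfolding elems_def by blast

lemma chart_inv_in_elems: "\<alpha> \<in> I \<Longrightarrow> x \<in> Lat F \<Longrightarrow> chart_inv I mu \<alpha> x \<in> elems F I mu"
  unfolding elems_def by blast

lemma elems_undefined: "m \<in> elems F I mu \<Longrightarrow> \<beta> \<notin> I \<Longrightarrow> m \<beta> = undefined"
  by (erule elemsE) (simp add: chart_inv_def)

definition elem_zero :: "'i set \<Rightarrow> 'i \<Rightarrow> 'a::zero" where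
  "elem_zero I = (\<lambda>\<beta>. if \<beta> \<in> I then 0 else undefined)"

locale polyptych_lattice =
  fixes F :: "real set" and I :: "'i set" and mu :: "'i \<Rightarrow> 'i \<Rightarrow> 'a::euclidean_space \<Rightarrow> 'a"
  assumes subring: "subring_R F"
    and polyptych: "polyptych F I mu"
begin

lemma index_nonempty: "I \<noteq> {}"
  using polyptych by (simp add: polyptych_def)

lemma mu_Lat: "\<alpha> \<in> I \<Longrightarrow> \<beta> \<in> I \<Longrightarrow> x \<in> Lat F \<Longrightarrow> mu \<alpha> \<beta> x \<in> Lat F"
  using polyptych unfolding polyptych_def piecewise_F_linear_def by blast

lemma mu_zero:
  assumes "\<alpha> \<in> I" "\<beta> \<in> I"
  shows "mu \<alpha> \<beta> 0 = 0"
proof -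
  obtain \<Sigma> where fan: "complete_F_fan F \<Sigma>"
    and pieces: "\<forall>\<sigma>\<in>\<Sigma>. \<exists>L. F_linear_map F L \<and> (\<forall>x\<in>\<sigma> \<inter> Lat F. mu \<alpha> \<beta> x = L x)"
    using polyptych assms unfolding polyptych_def piecewise_F_linear_def by blast
  then obtain \<sigma> where "\<sigma> \<in> \<Sigma>" "0 \<in> \<sigma>"
    unfolding complete_F_fan_def by blast
  with pieces obtain L :: "'a \<Rightarrow> 'a" where "linear L" "mu \<alpha> \<beta> 0 = L 0"
    using Lat_zero[OF subring] unfolding F_linear_map_def by blast
  then show ?thesis
    by (simp add: linear_0)
qed

lemma chart_inv_mu: "\<alpha> \<in> I \<Longrightarrow> \<beta> \<in> I \<Longrightarrow> x \<in> Lat F \<Longrightarrow> chart_inv I mu \<beta> (mu \<alpha> \<beta> x) = chart_inv I mu \<alpha> x"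
  using polyptych unfolding polyptych_def chart_inv_def by auto

lemma elems_Lat: "m \<in> elems F I mu \<Longrightarrow> \<beta> \<in> I \<Longrightarrow> m \<beta> \<in> Lat F"
  by (erule elemsE) (auto simp: chart_inv_def mu_Lat)

lemma chart_inv_eval: "m \<in> elems F I mu \<Longrightarrow> \<beta> \<in> I \<Longrightarrow> chart_inv I mu \<beta> (m \<beta>) = m"
  by (erule elemsE) (simp add: chart_inv_def chart_inv_mu[unfolded chart_inv_def])

lemma padd_in_elems:
  "m \<in> elems F I mu \<Longrightarrow> m' \<in> elems F I mu \<Longrightarrow> \<beta> \<in> I \<Longrightarrow> padd I mu \<beta> m m' \<in> elems F I mu"
  unfolding padd_def by (intro chart_inv_in_elems Lat_add[OF subring] elems_Lat)

lemma pscale_in_elems: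
  "m \<in> elems F I mu \<Longrightarrow> c \<in> F \<Longrightarrow> \<beta> \<in> I \<Longrightarrow> pscale I mu \<beta> c m \<in> elems F I mu"
  unfolding pscale_def by (intro chart_inv_in_elems Lat_scaleR[OF subring] elems_Lat)

lemma chart_inv_zero: "\<alpha> \<in> I \<Longrightarrow> chart_inv I mu \<alpha> 0 = elem_zero I"
  by (auto simp: chart_inv_def elem_zero_def mu_zero)

lemma elem_zero_in_elems: "elem_zero I \<in> elems F I mu"
proof -
  obtain \<alpha> where "\<alpha> \<in> I"
    using index_nonempty by blast
  then have "chart_inv I mu \<alpha> 0 \<in> elems F I mu"
    using Lat_zero[OF subring] by (rule chart_inv_in_elems)
  then show ?thesis
    using chart_inv_zero[OF \<open>\<alpha> \<in> I\<close>] by simp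
qed

lemma padd_elem_zero_right: "m \<in> elems F I mu \<Longrightarrow> \<beta> \<in> I \<Longrightarrow> padd I mu \<beta> m (elem_zero I) = m"
  by (simp add: padd_def elem_zero_def chart_inv_eval)

lemma padd_elem_zero_left: "m \<in> elems F I mu \<Longrightarrow> \<beta> \<in> I \<Longrightarrow> padd I mu \<beta> (elem_zero I) m = m"
  by (simp add: padd_def elem_zero_def chart_inv_eval)

lemma pscale_elem_zero: "\<beta> \<in> I \<Longrightarrow> pscale I mu \<beta> c (elem_zero I) = elem_zero I"
  by (simp add: pscale_def elem_zero_def chart_inv_zero[unfolded elem_zero_def])

lemma Sp_elem_zero:
  assumes "p \<in> Sp F I mu"
  shows "p (elem_zero I) = 0"
proof -
  obtain \<alpha> where \<alpha>: "\<alpha> \<in> I"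
    using index_nonempty by blast
  have "p (pscale I mu \<alpha> 0 (elem_zero I)) = 0 * p (elem_zero I)"
    using assms zero_in_subring[OF subring] elem_zero_in_elems \<alpha> by (intro Sp_pscale) auto
  then show ?thesis
    by (simp add: pscale_elem_zero[OF \<alpha>])
qed

lemma Sp_pullback:
  assumes P: "P \<in> Sp F K nu"
    and e_elems: "\<And>m. m \<in> elems F I mu \<Longrightarrow> e m \<in> elems F K nu"
    and h: "h ` K = I"
    and e_padd: "\<And>k m m'. k \<in> K \<Longrightarrow> m \<in> elems F I mu \<Longrightarrow> m' \<in> elems F I mu \<Longrightarrow>
          padd K nu k (e m) (e m') = e (padd I mu (h k) m m')"
    and e_pscale: "\<And>k c m. k \<in> K \<Longrightarrow> c \<in> F \<Longrightarrow> m \<in> elems F I mu \<Longrightarrow>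
          pscale K nu k c (e m) = e (pscale I mu (h k) c m)"
  shows "restrict (\<lambda>m. P (e m)) (elems F I mu) \<in> Sp F I mu"
    (is "?p \<in> _")
proof (rule SpI)
  show "?p \<in> elems F I mu \<rightarrow>\<^sub>E F"
    using Sp_in_subring[OF P] e_elems by auto
next
  fix m m' assume m: "m \<in> elems F I mu" and m': "m' \<in> elems F I mu"
  have "?p m + ?p m' = Min ((\<lambda>k. P (padd K nu k (e m) (e m'))) ` K)"
    using Sp_padd[OF P e_elems[OF m] e_elems[OF m']] m m' by simp
  also have "(\<lambda>k. P (padd K nu k (e m) (e m'))) ` K = (\<lambda>k. ?p (padd I mu (h k) m m')) ` K"
  proof (rule image_cong[OF refl])
    fix k assume "k \<in> K"
    then have "padd I mu (h k) m m' \<in> elems F I mu"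
      using m m' h by (intro padd_in_elems) auto
    then show "P (padd K nu k (e m) (e m')) = ?p (padd I mu (h k) m m')"
      using \<open>k \<in> K\<close> m m' by (simp add: e_padd)
  qed
  also have "\<dots> = (\<lambda>\<alpha>. ?p (padd I mu \<alpha> m m')) ` h ` K"
    unfolding image_image ..
  finally show "?p m + ?p m' = Min ((\<lambda>\<alpha>. ?p (padd I mu \<alpha> m m')) ` I)"
    by (simp add: h)
next
  fix c m \<alpha> assume c: "c \<in> F" "c \<ge> 0" and m: "m \<in> elems F I mu" and "\<alpha> \<in> I"
  then obtain k where k: "k \<in> K" "\<alpha> = h k"
    using h by blast
  have "P (e (pscale I mu \<alpha> c m)) = P (pscale K nu k c (e m))"
    using k c m by (simp add: e_pscale)
  also have "\<dots> = c * P (e m)"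
    using Sp_pscale[OF P c e_elems[OF m] k(1)] .
  finally show "?p (pscale I mu \<alpha> c m) = c * ?p m"
    using m c \<open>\<alpha> \<in> I\<close> by (simp add: pscale_in_elems)
qed

end

definition elem_pair :: "'i set \<Rightarrow> 'j set \<Rightarrow> ('i \<Rightarrow> 'a) \<Rightarrow> ('j \<Rightarrow> 'b) \<Rightarrow> ('i \<times> 'j \<Rightarrow> 'a \<times> 'b)" where
  "elem_pair I J m m' = (\<lambda>\<gamma>. if \<gamma> \<in> I \<times> J then (m (fst \<gamma>), m' (snd \<gamma>)) else undefined)"

lemma elem_pair_apply: "\<alpha> \<in> I \<Longrightarrow> \<alpha>' \<in> J \<Longrightarrow> elem_pair I J m m' (\<alpha>, \<alpha>') = (m \<alpha>, m' \<alpha>')"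
  by (simp add: elem_pair_def)

lemma chart_inv_prod_mu:
  "chart_inv (I \<times> J) (prod_mu mu nu) (\<alpha>, \<alpha>') (x, y) =
    elem_pair I J (chart_inv I mu \<alpha> x) (chart_inv J nu \<alpha>' y)"
  by (rule ext) (auto simp: chart_inv_def prod_mu_def elem_pair_def split: prod.splits)

lemma padd_elem_pair:
  assumes "\<alpha> \<in> I" "\<alpha>' \<in> J"
  shows "padd (I \<times> J) (prod_mu mu nu) (\<alpha>, \<alpha>') (elem_pair I J m m') (elem_pair I J n n') =
    elem_pair I J (padd I mu \<alpha> m n) (padd J nu \<alpha>' m' n')"
  using assms by (simp add: padd_def elem_pair_apply chart_inv_prod_mu)

lemma pscale_elem_pair:
  assumes "\<alpha> \<in> I" "\<alpha>' \<in> J"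
  shows "pscale (I \<times> J) (prod_mu mu nu) (\<alpha>, \<alpha>') c (elem_pair I J m m') =
    elem_pair I J (pscale I mu \<alpha> c m) (pscale J nu \<alpha>' c m')"
  using assms by (simp add: pscale_def elem_pair_apply chart_inv_prod_mu)

lemma elem_pair_in_elems:
  assumes "m \<in> elems F I mu" "m' \<in> elems F J nu"
  shows "elem_pair I J m m' \<in> elems F (I \<times> J) (prod_mu mu nu)"
proof -
  obtain \<alpha> x where m: "\<alpha> \<in> I" "x \<in> Lat F" "m = chart_inv I mu \<alpha> x"
    using assms(1) by (rule elemsE)
  obtain \<alpha>' y where m': "\<alpha>' \<in> J" "y \<in> Lat F" "m' = chart_inv J nu \<alpha>' y"
    using assms(2) by (rule elemsE)
  have "chart_inv (I \<times> J) (prod_mu mu nu) (\<alpha>, \<alpha>') (x, y) \<in> elems F (I \<times> J) (prod_mu mu nu)"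
    using m m' by (intro chart_inv_in_elems) (simp_all add: Pair_in_Lat_iff)
  then show ?thesis
    using m m' by (simp add: chart_inv_prod_mu)
qed

lemma elems_prod_mu_cases:
  assumes "E \<in> elems F (I \<times> J) (prod_mu mu nu)"
  obtains m m' where "m \<in> elems F I mu" "m' \<in> elems F J nu" "E = elem_pair I J m m'"
proof -
  obtain \<gamma> w where \<gamma>: "\<gamma> \<in> I \<times> J" "w \<in> Lat F" "E = chart_inv (I \<times> J) (prod_mu mu nu) \<gamma> w"
    using assms by (rule elemsE)
  obtain \<alpha> \<alpha>' x y where split: "\<gamma> = (\<alpha>, \<alpha>')" "w = (x, y)"
    by (cases \<gamma>, cases w) blast
  have "\<alpha> \<in> I" "\<alpha>' \<in> J" "x \<in> Lat F" "y \<in> Lat F"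
    using \<gamma>(1,2) unfolding split by (simp_all add: Pair_in_Lat_iff)
  moreover have "E = elem_pair I J (chart_inv I mu \<alpha> x) (chart_inv J nu \<alpha>' y)"
    using \<gamma>(3) unfolding split by (simp only: chart_inv_prod_mu)
  ultimately show thesis
    by (metis that chart_inv_in_elems)
qed

lemma pr1_elem_pair:
  assumes "J \<noteq> {}" "m \<in> elems F I mu"
  shows "pr1 I J (elem_pair I J m m') = m"
proof
  fix \<alpha>
  have "(SOME \<beta>. \<beta> \<in> J) \<in> J"
    using assms(1) by (simp add: some_in_eq)
  then show "pr1 I J (elem_pair I J m m') \<alpha> = m \<alpha>"
    using elems_undefined[OF assms(2)] by (auto simp: pr1_def elem_pair_def)
qed

lemma pr2_elem_pair:
  assumes "I \<noteq> {}" "m' \<in> elems F J nu"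
  shows "pr2 I J (elem_pair I J m m') = m'"
proof
  fix \<beta>
  have "(SOME \<alpha>. \<alpha> \<in> I) \<in> I"
    using assms(1) by (simp add: some_in_eq)
  then show "pr2 I J (elem_pair I J m m') \<beta> = m' \<beta>"
    using elems_undefined[OF assms(2)] by (auto simp: pr2_def elem_pair_def)
qed

definition split_point :: "real set \<Rightarrow> 'i set \<Rightarrow> ('i \<Rightarrow> 'i \<Rightarrow> 'a::euclidean_space \<Rightarrow> 'a) \<Rightarrow>
    'j set \<Rightarrow> ('j \<Rightarrow> 'j \<Rightarrow> 'b::euclidean_space \<Rightarrow> 'b) \<Rightarrow> ((('i \<times> 'j) \<Rightarrow> ('a \<times> 'b)) \<Rightarrow> real) \<Rightarrow>
    (('i \<Rightarrow> 'a) \<Rightarrow> real) \<times> (('j \<Rightarrow> 'b) \<Rightarrow> real)" where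
  "split_point F I mu J nu P =
    (restrict (\<lambda>m. P (elem_pair I J m (elem_zero J))) (elems F I mu),
     restrict (\<lambda>m'. P (elem_pair I J (elem_zero I) m')) (elems F J nu))"

locale polyptych_lattice_pair =
  M: polyptych_lattice F I mu + N: polyptych_lattice F J nu
  for F :: "real set"
    and I :: "'i set" and mu :: "'i \<Rightarrow> 'i \<Rightarrow> 'a::euclidean_space \<Rightarrow> 'a"
    and J :: "'j set" and nu :: "'j \<Rightarrow> 'j \<Rightarrow> 'b::euclidean_space \<Rightarrow> 'b" +
  assumes finite_I: "finite I" and finite_J: "finite J"
begin

lemma sum_point_elem_pair:
  "m \<in> elems F I mu \<Longrightarrow> m' \<in> elems F J nu \<Longrightarrow>
    sum_point F I mu J nu (p, p') (elem_pair I J m m') = p m + p' m'"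
  by (simp add: sum_point_def elem_pair_in_elems pr1_elem_pair pr2_elem_pair
      M.index_nonempty N.index_nonempty)

lemma sum_point_in_Sp:
  assumes p: "p \<in> Sp F I mu" and p': "p' \<in> Sp F J nu"
  shows "sum_point F I mu J nu (p, p') \<in> Sp F (I \<times> J) (prod_mu mu nu)"
    (is "?P \<in> _")
proof (rule SpI)
  show "?P \<in> elems F (I \<times> J) (prod_mu mu nu) \<rightarrow>\<^sub>E F"
  proof
    fix E assume "E \<in> elems F (I \<times> J) (prod_mu mu nu)"
    then obtain m m' where m: "m \<in> elems F I mu" "m' \<in> elems F J nu" "E = elem_pair I J m m'"
      by (rule elems_prod_mu_cases)
    have "p m + p' m' \<in> F"
      using M.subring Sp_in_subring[OF p m(1)] Sp_in_subring[OF p' m(2)] by (simp add: subring_R_def)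
    then show "?P E \<in> F"
      using m by (simp add: sum_point_elem_pair)
  qed (simp add: sum_point_def)
next
  fix E E' assume E: "E \<in> elems F (I \<times> J) (prod_mu mu nu)" and E': "E' \<in> elems F (I \<times> J) (prod_mu mu nu)"
  obtain m m' where m: "m \<in> elems F I mu" "m' \<in> elems F J nu" "E = elem_pair I J m m'"
    using E by (rule elems_prod_mu_cases)
  obtain n n' where n: "n \<in> elems F I mu" "n' \<in> elems F J nu" "E' = elem_pair I J n n'"
    using E' by (rule elems_prod_mu_cases)
  have "(\<lambda>\<gamma>. ?P (padd (I \<times> J) (prod_mu mu nu) \<gamma> E E')) ` (I \<times> J)
      = (\<lambda>(\<alpha>, \<alpha>'). p (padd I mu \<alpha> m n) + p' (padd J nu \<alpha>' m' n')) ` (I \<times> J)"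
  proof (rule image_cong[OF refl])
    fix \<gamma> assume "\<gamma> \<in> I \<times> J"
    then obtain \<alpha> \<alpha>' where \<gamma>: "\<gamma> = (\<alpha>, \<alpha>')" "\<alpha> \<in> I" "\<alpha>' \<in> J"
      by blast
    have "padd I mu \<alpha> m n \<in> elems F I mu" "padd J nu \<alpha>' m' n' \<in> elems F J nu"
      using m n \<gamma> by (simp_all add: M.padd_in_elems N.padd_in_elems)
    then show "?P (padd (I \<times> J) (prod_mu mu nu) \<gamma> E E') =
        (\<lambda>(\<alpha>, \<alpha>'). p (padd I mu \<alpha> m n) + p' (padd J nu \<alpha>' m' n')) \<gamma>"
      using m(3) n(3) \<gamma> by (simp add: padd_elem_pair sum_point_elem_pair)
  qed
  also have "Min \<dots> = Min ((\<lambda>\<alpha>. p (padd I mu \<alpha> m n)) ` I) + Min ((\<lambda>\<alpha>'. p' (padd J nu \<alpha>' m' n')) ` J)"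
    using finite_I finite_J M.index_nonempty N.index_nonempty by (rule Min_add_Times)
  also have "\<dots> = (p m + p n) + (p' m' + p' n')"
    using Sp_padd[OF p m(1) n(1)] Sp_padd[OF p' m(2) n(2)] by simp
  also have "\<dots> = ?P E + ?P E'"
    using m n by (simp add: sum_point_elem_pair)
  finally show "?P E + ?P E' = Min ((\<lambda>\<gamma>. ?P (padd (I \<times> J) (prod_mu mu nu) \<gamma> E E')) ` (I \<times> J))"
    by simp
next
  fix c E \<gamma> assume c: "c \<in> F" "c \<ge> 0" and E: "E \<in> elems F (I \<times> J) (prod_mu mu nu)"
    and "\<gamma> \<in> I \<times> J"
  then obtain \<alpha> \<alpha>' where \<gamma>: "\<gamma> = (\<alpha>, \<alpha>')" "\<alpha> \<in> I" "\<alpha>' \<in> J"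
    by blast
  obtain m m' where m: "m \<in> elems F I mu" "m' \<in> elems F J nu" "E = elem_pair I J m m'"
    using E by (rule elems_prod_mu_cases)
  have "pscale I mu \<alpha> c m \<in> elems F I mu" "pscale J nu \<alpha>' c m' \<in> elems F J nu"
    using m c \<gamma> by (simp_all add: M.pscale_in_elems N.pscale_in_elems)
  then have "?P (pscale (I \<times> J) (prod_mu mu nu) \<gamma> c E) = p (pscale I mu \<alpha> c m) + p' (pscale J nu \<alpha>' c m')"
    using m(3) \<gamma> by (simp add: pscale_elem_pair sum_point_elem_pair)
  also have "\<dots> = c * (p m + p' m')"
    using Sp_pscale[OF p c m(1) \<gamma>(2)] Sp_pscale[OF p' c m(2) \<gamma>(3)] by (simp add: distrib_left)
  also have "\<dots> = c * ?P E"
    using m by (simp add: sum_point_elem_pair)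
  finally show "?P (pscale (I \<times> J) (prod_mu mu nu) \<gamma> c E) = c * ?P E" .
qed

lemma split_point_in_Sp:
  assumes P: "P \<in> Sp F (I \<times> J) (prod_mu mu nu)"
  shows "split_point F I mu J nu P \<in> Sp F I mu \<times> Sp F J nu"
proof -
  have "restrict (\<lambda>m. P (elem_pair I J m (elem_zero J))) (elems F I mu) \<in> Sp F I mu"
    using P N.elem_zero_in_elems M.index_nonempty N.index_nonempty
    by (intro M.Sp_pullback[where h = fst])
      (auto simp: elem_pair_in_elems padd_elem_pair pscale_elem_pair
        N.padd_elem_zero_right N.pscale_elem_zero)
  moreover have "restrict (\<lambda>m'. P (elem_pair I J (elem_zero I) m')) (elems F J nu) \<in> Sp F J nu"
    using P M.elem_zero_in_elems M.index_nonempty N.index_nonempty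
    by (intro N.Sp_pullback[where h = snd])
      (auto simp: elem_pair_in_elems padd_elem_pair pscale_elem_pair
        M.padd_elem_zero_right M.pscale_elem_zero)
  ultimately show ?thesis
    by (simp add: split_point_def)
qed

lemma split_point_sum_point:
  assumes p: "p \<in> Sp F I mu" and p': "p' \<in> Sp F J nu"
  shows "split_point F I mu J nu (sum_point F I mu J nu (p, p')) = (p, p')"
proof -
  have "restrict (\<lambda>m. sum_point F I mu J nu (p, p') (elem_pair I J m (elem_zero J))) (elems F I mu)
      = restrict p (elems F I mu)"
    using N.elem_zero_in_elems N.Sp_elem_zero[OF p']
    by (intro restrict_cong) (simp_all add: sum_point_elem_pair)
  also have "\<dots> = p"
    using Sp_extensional[OF p] by (simp add: PiE_iff extensional_restrict)
  moreover have "restrict (\<lambda>m'. sum_point F I mu J nu (p, p') (elem_pair I J (elem_zero I) m')) (elems F J nu)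
      = restrict p' (elems F J nu)"
    using M.elem_zero_in_elems M.Sp_elem_zero[OF p]
    by (intro restrict_cong) (simp_all add: sum_point_elem_pair)
  moreover have "\<dots> = p'"
    using Sp_extensional[OF p'] by (simp add: PiE_iff extensional_restrict)
  ultimately show ?thesis
    unfolding split_point_def by simp
qed

lemma sum_point_split_point:
  assumes P: "P \<in> Sp F (I \<times> J) (prod_mu mu nu)"
  shows "sum_point F I mu J nu (split_point F I mu J nu P) = P"
proof
  fix E
  show "sum_point F I mu J nu (split_point F I mu J nu P) E = P E"
  proof (cases "E \<in> elems F (I \<times> J) (prod_mu mu nu)")
    case True
    then obtain m m' where m: "m \<in> elems F I mu" "m' \<in> elems F J nu" "E = elem_pair I J m m'"
      by (rule elems_prod_mu_cases)
    define E1 where "E1 = elem_pair I J m (elem_zero J :: 'j \<Rightarrow> 'b)"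
    define E2 where "E2 = elem_pair I J (elem_zero I :: 'i \<Rightarrow> 'a) m'"
    have E12: "E1 \<in> elems F (I \<times> J) (prod_mu mu nu)" "E2 \<in> elems F (I \<times> J) (prod_mu mu nu)"
      unfolding E1_def E2_def using m M.elem_zero_in_elems N.elem_zero_in_elems
      by (simp_all add: elem_pair_in_elems)
    have "sum_point F I mu J nu (split_point F I mu J nu P) E = P E1 + P E2"
      using m M.elem_zero_in_elems N.elem_zero_in_elems
      by (simp add: split_point_def sum_point_elem_pair E1_def E2_def)
    also have "\<dots> = Min ((\<lambda>\<gamma>. P (padd (I \<times> J) (prod_mu mu nu) \<gamma> E1 E2)) ` (I \<times> J))"
      using Sp_padd[OF P E12] .
    also have "(\<lambda>\<gamma>. P (padd (I \<times> J) (prod_mu mu nu) \<gamma> E1 E2)) ` (I \<times> J) = (\<lambda>\<gamma>. P E) ` (I \<times> J)"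
    proof (rule image_cong[OF refl])
      fix \<gamma> assume "\<gamma> \<in> I \<times> J"
      then obtain \<alpha> \<alpha>' where \<gamma>: "\<gamma> = (\<alpha>, \<alpha>')" "\<alpha> \<in> I" "\<alpha>' \<in> J"
        by blast
      have "padd (I \<times> J) (prod_mu mu nu) \<gamma> E1 E2 = E"
        unfolding \<gamma>(1) E1_def E2_def m(3) using \<gamma>(2,3) m(1,2)
        by (simp add: padd_elem_pair M.padd_elem_zero_right N.padd_elem_zero_left)
      then show "P (padd (I \<times> J) (prod_mu mu nu) \<gamma> E1 E2) = P E"
        by simp
    qed
    also have "\<dots> = {P E}"
      using M.index_nonempty N.index_nonempty by blast
    finally show ?thesis
      by simp
  next
    case False
    then have "P E = undefined"
      using Sp_extensional[OF P] by (blast intro: PiE_arb)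
    with False show ?thesis
      by (cases "split_point F I mu J nu P") (simp add: sum_point_def)
  qed
qed

lemma bij_betw_sum_point:
  "bij_betw (sum_point F I mu J nu) (Sp F I mu \<times> Sp F J nu) (Sp F (I \<times> J) (prod_mu mu nu))"
proof (rule bij_betw_byWitness[where f' = "split_point F I mu J nu"])
  show "split_point F I mu J nu ` Sp F (I \<times> J) (prod_mu mu nu) \<subseteq> Sp F I mu \<times> Sp F J nu"
    using split_point_in_Sp by blast
  show "sum_point F I mu J nu ` (Sp F I mu \<times> Sp F J nu) \<subseteq> Sp F (I \<times> J) (prod_mu mu nu)"
    using sum_point_in_Sp by blast
  show "\<forall>pp\<in>Sp F I mu \<times> Sp F J nu. split_point F I mu J nu (sum_point F I mu J nu pp) = pp"
    using split_point_sum_point by blast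
  show "\<forall>P\<in>Sp F (I \<times> J) (prod_mu mu nu). sum_point F I mu J nu (split_point F I mu J nu P) = P"
    using sum_point_split_point by blast
qed

lemma sum_point_Sp_chart:
  assumes "\<alpha> \<in> I" "\<alpha>' \<in> J" and p: "p \<in> Sp_chart F I mu \<alpha>" and p': "p' \<in> Sp_chart F J nu \<alpha>'"
  shows "sum_point F I mu J nu (p, p') \<in> Sp_chart F (I \<times> J) (prod_mu mu nu) (\<alpha>, \<alpha>')"
proof -
  have chart_value: "sum_point F I mu J nu (p, p') (chart_inv (I \<times> J) (prod_mu mu nu) (\<alpha>, \<alpha>') w) =
      (\<lambda>(x, y). p (chart_inv I mu \<alpha> x) + p' (chart_inv J nu \<alpha>' y)) w"
    if "w \<in> Lat F" for w
  proof -
    obtain x y where "w = (x, y)" "x \<in> Lat F" "y \<in> Lat F"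
      using \<open>w \<in> Lat F\<close> by (metis Pair_in_Lat_iff surj_pair)
    then show ?thesis
      using assms(1,2) by (simp only: chart_inv_prod_mu sum_point_elem_pair chart_inv_in_elems case_prod_conv)
  qed
  have "F_linear_functional F
      (\<lambda>w. sum_point F I mu J nu (p, p') (chart_inv (I \<times> J) (prod_mu mu nu) (\<alpha>, \<alpha>') w)) \<longleftrightarrow>
    F_linear_functional F (\<lambda>(x, y). p (chart_inv I mu \<alpha> x) + p' (chart_inv J nu \<alpha>' y))"
    by (rule F_linear_functional_cong[OF M.subring]) (rule chart_value)
  also have "\<dots>"
    using p p' by (intro F_linear_functional_Pair) (simp_all add: Sp_chart_def)
  finally have "F_linear_functional F
      (\<lambda>w. sum_point F I mu J nu (p, p') (chart_inv (I \<times> J) (prod_mu mu nu) (\<alpha>, \<alpha>') w))" .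
  moreover have "sum_point F I mu J nu (p, p') \<in> Sp F (I \<times> J) (prod_mu mu nu)"
    using p p' by (intro sum_point_in_Sp) (simp_all add: Sp_chart_def)
  ultimately show ?thesis
    by (simp add: Sp_chart_def)
qed

end

theorem mainTheorem5:
  fixes F :: "real set"
    and I :: "'i set" and mu :: "'i \<Rightarrow> 'i \<Rightarrow> 'a::euclidean_space \<Rightarrow> 'a"
    and J :: "'j set" and nu :: "'j \<Rightarrow> 'j \<Rightarrow> 'b::euclidean_space \<Rightarrow> 'b"
  assumes "subring_R F"
    and "polyptych F I mu" and "finite I"
    and "polyptych F J nu" and "finite J"
  shows "bij_betw (sum_point F I mu J nu) (Sp F I mu \<times> Sp F J nu) (Sp F (I \<times> J) (prod_mu mu nu))
    \<and> (\<forall>\<alpha>\<in>I. \<forall>\<alpha>'\<in>J. sum_point F I mu J nu ` (Sp_chart F I mu \<alpha> \<times> Sp_chart F J nu \<alpha>')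
          \<subseteq> Sp_chart F (I \<times> J) (prod_mu mu nu) (\<alpha>, \<alpha>'))"
proof -
  interpret polyptych_lattice_pair F I mu J nu
    using assms by unfold_locales
  have "sum_point F I mu J nu ` (Sp_chart F I mu \<alpha> \<times> Sp_chart F J nu \<alpha>')
      \<subseteq> Sp_chart F (I \<times> J) (prod_mu mu nu) (\<alpha>, \<alpha>')" if "\<alpha> \<in> I" "\<alpha>' \<in> J" for \<alpha> \<alpha>'
    using sum_point_Sp_chart[OF that] by auto
  with bij_betw_sum_point show ?thesis
    by blast
qed

end
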